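(* Let $a\ge 4$, $b>0$, $d>0$ with $d<b$, let $J_1,J_2$ satisfy the standing assumptions below, and assume the support of $J_2$ is contained in $[-S,S]$ for some $S\in(0,\infty)$. Let $s=s^*$ and let $\lambda_1\in(0,\hat\lambda_2)$ be the double root of $A(\lambda):=d[I_2(\lambda)-1]-s^*\lambda+b=0$ (so that $d\int_{\mathbb{R}}J_2(y)ye^{\lambda_1 y}dy=s^*$). Choose $\lambda_0\in(0,\min\{\lambda_1,\hat\lambda_1\})$ with $I_1(\lambda_0)-1-s^*\lambda_0<0$. Choose $h>\lambda_1 e$ large enough that $hze^{-\lambda_1 z}=1$ has exactly two roots $z_1<z_2$ with $0<z_1<1/\lambda_1<z_2$ and $z_2-z_1>S$. Choose $z_3>z_2$ with $he^{-\lambda_0 z_3}\le a(\lambda_1-\lambda_0)e/4$. Choose $q>0$ large enough that $z_0:=(q/h)^2>z_2$ and $$q>\frac{16bh^2\max_{z>0}\{z^2(z+S)^{3/2}e^{-\lambda_1 z}\}}{d\int_{\mathbb{R}}J_2(y)y^2e^{\lambda_1 y}dy}.$$ Let $g(z):=(hz-q\sqrt z)e^{-\lambda_1 z}$ for $z\ge0$ and let $z_M\in(z_0,\infty)$ be its unique maximum point. Fix $\delta$ with $0<\delta<\min\{g(z_M),\,1-1/a,\,\tfrac12(1-d/b)\}$, let $z_4\in(z_0,z_M)$ satisfy $g(z_4)=\delta$, and choose $$0<\varepsilon<\frac{\min\{\delta,\,hz_4-q\sqrt{z_4}\}}{1+s^*\lambda_1+a}.$$ Define $\overline\phi(z)=1-\varepsilon$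 for $z\le0$, $\overline\phi(z)=1-\varepsilon e^{-\lambda_1 z}$ for $z>0$; $\underline\phi(z)=\tfrac12$ for $z\le z_3$, $\underline\phi(z)=1-\tfrac12e^{-\lambda_0(z-z_3)}$ for $z>z_3$; $\overline\psi(z)=1$ for $z\le z_2$, $\overline\psi(z)=hze^{-\lambda_1 z}$ for $z>z_2$; $\underline\psi(z)=\delta$ for $z\le z_4$, $\underline\psi(z)=(hz-q\sqrt z)e^{-\lambda_1 z}$ for $z>z_4$. Then $(\overline\phi,\overline\psi)$ and $(\underline\phi,\underline\psi)$ are a pair of upper and lower solutions of the traveling wave system with speed $s^*$ (in the sense defined below).
   Context: Standing assumptions: for $i=1,2$, $J_i$ is nonnegative and continuous on $\mathbb{R}$, $\int_{\mathbb{R}}J_i=1$, $J_i(y)=J_i(-y)$, and there is $\hat\lambda_i\in(0,\infty]$ with $I_i(\lambda):=\int_{\mathbb{R}}J_i(y)e^{\lambda y}dy<\infty$ for $\lambda\in(0,\hat\lambda_i)$ and $I_i(\lambda)\to\infty$ as $\lambda\uparrow\hat\lambda_i$. Define $s^*:=\inf_{\lambda\in(0,\hat\lambda_2)}\frac{d[I_2(\lambda)-1]+b}{\lambda}$ (positive and attained). For a function $u$ let $\mathcal{N}_i[u](z):=\int_{\mathbb{R}}J_i(y)u(z-y)dy-u(z)$. Definition: positive continuous functions $(\overline\phi,\overline\psi)$ and $(\underline\phi,\underline\psi)$ are a pair of upper and lower solutions of the system $\mathcal{N}_1[\phi]+s\phi'+a\phi(1-\phi)-\psi=0$, $d\mathcal{N}_2[\psi]+s\psi'+b\psi(1-\psi/\phi)=0$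 if $\underline\phi\le\overline\phi$ and $\underline\psi\le\overline\psi$ on $\mathbb{R}$ and, for all $z\in\mathbb{R}\setminus E$ with $E$ some finite subset of $\mathbb{R}$: $\mathcal{N}_1[\overline\phi](z)+s\overline\phi'(z)+a\overline\phi(z)[1-\overline\phi(z)]-\underline\psi(z)\le0$; $d\mathcal{N}_2[\overline\psi](z)+s\overline\psi'(z)+b\overline\psi(z)[1-\overline\psi(z)/\overline\phi(z)]\le0$; $\mathcal{N}_1[\underline\phi](z)+s\underline\phi'(z)+a\underline\phi(z)[1-\underline\phi(z)]-\overline\psi(z)\ge0$; $d\mathcal{N}_2[\underline\psi](z)+s\underline\psi'(z)+b\underline\psi(z)[1-\underline\psi(z)/\underline\phi(z)]\ge0$. *)

theory Defs
  imports "HOL-Analysis.Analysis"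
begin

definition Imom :: "(real \<Rightarrow> real) \<Rightarrow> real \<Rightarrow> real" where
  "Imom J l = (LINT y|lborel. J y * exp (l * y))"

definition kernel_ok :: "(real \<Rightarrow> real) \<Rightarrow> ereal \<Rightarrow> bool" where
  "kernel_ok J lhat \<longleftrightarrow>
     (\<forall>y. 0 \<le> J y) \<and> continuous_on UNIV J \<and>
     integrable lborel J \<and> (LINT y|lborel. J y) = 1 \<and>
     (\<forall>y. J y = J (- y)) \<and>
     0 < lhat \<and>
     (\<forall>l. 0 < l \<and> ereal l < lhat \<longrightarrow> integrable lborel (\<lambda>y. J y * exp (l * y))) \<and>
     (if lhat = \<infinity> then filterlim (Imom J) at_top at_top
      else filterlim (Imom J) at_top (at_left (real_of_ereal lhat)))"

definition sstar :: "(real \<Rightarrow> real) \<Rightarrow> ereal \<Rightarrow> real \<Rightarrow> real \<Rightarrow> real" where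
  "sstar J2 lhat2 d b =
     Inf ((\<lambda>l. (d * (Imom J2 l - 1) + b) / l) ` {l. 0 < l \<and> ereal l < lhat2})"

definition Nop :: "(real \<Rightarrow> real) \<Rightarrow> (real \<Rightarrow> real) \<Rightarrow> real \<Rightarrow> real" where
  "Nop J u z = (LINT y|lborel. J y * u (z - y)) - u z"

definition upper_lower_pair ::
  "(real \<Rightarrow> real) \<Rightarrow> (real \<Rightarrow> real) \<Rightarrow> real \<Rightarrow> real \<Rightarrow> real \<Rightarrow> real \<Rightarrow>
   (real \<Rightarrow> real) \<Rightarrow> (real \<Rightarrow> real) \<Rightarrow> (real \<Rightarrow> real) \<Rightarrow> (real \<Rightarrow> real) \<Rightarrow> bool" where
  "upper_lower_pair J1 J2 a b d s phiU psiU phiL psiL \<longleftrightarrow>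
     continuous_on UNIV phiU \<and> continuous_on UNIV psiU \<and>
     continuous_on UNIV phiL \<and> continuous_on UNIV psiL \<and>
     (\<forall>z. 0 < phiU z \<and> 0 < psiU z \<and> 0 < phiL z \<and> 0 < psiL z) \<and>
     (\<forall>z. phiL z \<le> phiU z \<and> psiL z \<le> psiU z) \<and>
     (\<exists>E. finite E \<and> (\<forall>z. z \<notin> E \<longrightarrow>
        phiU differentiable at z \<and> psiU differentiable at z \<and>
        phiL differentiable at z \<and> psiL differentiable at z \<and>
        Nop J1 phiU z + s * deriv phiU z + a * phiU z * (1 - phiU z) - psiL z \<le> 0 \<and>
        d * Nop J2 psiU z + s * deriv psiU z + b * psiU z * (1 - psiU z / phiU z) \<le> 0 \<and>
        Nop J1 phiL z + s * deriv phiL z + a * phiL z * (1 - phiL z) - psiU z \<ge> 0 \<and>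
        d * Nop J2 psiL z + s * deriv psiL z + b * psiL z * (1 - psiL z / phiL z) \<ge> 0))"

end

theory Submission
  imports Defs "HOL-Real_Asymp.Real_Asymp"
begin

(* Off the break points 0, z2, z3, z4 all four profiles are smooth, and each inequality is
  checked pointwise. Where a profile is constant, the crude bounds inf u - u <= N[u] <= sup u - u
  suffice. On the exponential pieces everything reduces to exponential moments of the kernels.
  Since J2 vanishes outside [-S, S], N2 at z only sees a profile on [z - S, z + S]. There the upper
  psi is dominated by w(z) = h z e^(-lam1 z), and d N2[w] + s w' + b w vanishes identically
  because lam1 is a double root of A. For the lower psi, sqrt (z - y) is bounded above by its
  second order Taylor polynomial at z; the remainder contributes a multiple of the second
  exponential moment of J2 which, by the choice of q, dominates the quadratic term b psi^2 / phi.
  For the lower phi, the condition I1(lam0) - 1 - s lam0 < 0 and the choice of z3 play the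
  same role. *)

section \<open>Real-variable estimates\<close>

lemma has_real_derivative_if_le:
  fixes f g :: "real \<Rightarrow> real"
  assumes "z \<noteq> c"
    and "z < c \<Longrightarrow> (f has_real_derivative D) (at z)"
    and "c < z \<Longrightarrow> (g has_real_derivative D) (at z)"
  shows "((\<lambda>x. if x \<le> c then f x else g x) has_real_derivative D) (at z)"
proof (cases "z < c")
  case True
  show ?thesis
    by (rule has_field_derivative_transform_within_open[OF assms(2)[OF True], of "{..<c}"])
       (use True in auto)
next
  case False
  then have "c < z"
    using assms(1) by simp
  show ?thesis
    by (rule has_field_derivative_transform_within_open[OF assms(3)[OF \<open>c < z\<close>], of "{c<..}"])
       (use \<open>c < z\<close> in auto)
qed

lemma mult_exp_neg_le:
  fixes c z :: real
  assumes "0 < c"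
  shows "z * exp (- c * z) \<le> 1 / (c * exp 1)"
proof -
  have "c * z * exp (- c * z) \<le> exp (c * z - 1) * exp (- c * z)"
    using exp_ge_add_one_self[of "c * z - 1"] by (intro mult_right_mono) auto
  also have "\<dots> = exp (-1)"
    by (simp flip: exp_add)
  finally show ?thesis
    using assms by (simp add: field_simps exp_minus)
qed

lemma has_real_derivative_mult_exp_neg:
  "((\<lambda>x. x * exp (- lam * x)) has_real_derivative (1 - lam * z) * exp (- lam * z)) (at z)"
  by (auto intro!: derivative_eq_intros simp: algebra_simps)

lemma mult_exp_neg_mono:
  fixes lam x y :: real
  assumes "x \<le> y" "y \<le> 1 / lam" "0 < lam"
  shows "x * exp (- lam * x) \<le> y * exp (- lam * y)"
proof (rule DERIV_nonneg_imp_nondecreasing[OF assms(1)])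
  fix z assume "z \<le> y"
  then have "lam * z \<le> lam * y"
    using assms(3) by simp
  also have "\<dots> \<le> 1"
    using assms(2,3) by (simp add: field_simps)
  finally have "lam * z \<le> 1" .
  then show "\<exists>D. ((\<lambda>x. x * exp (- lam * x)) has_real_derivative D) (at z) \<and> 0 \<le> D"
    using has_real_derivative_mult_exp_neg by fastforce
qed

lemma mult_exp_neg_antimono:
  fixes lam x y :: real
  assumes "1 / lam \<le> x" "x \<le> y" "0 < lam"
  shows "y * exp (- lam * y) \<le> x * exp (- lam * x)"
proof (rule DERIV_nonpos_imp_nonincreasing[OF assms(2)])
  fix z assume "x \<le> z"
  have "1 \<le> lam * x"
    using assms(1,3) by (simp add: field_simps)
  also have "\<dots> \<le> lam * z"
    using \<open>x \<le> z\<close> assms(3) by simp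
  finally have "1 \<le> lam * z" .
  then show "\<exists>D. ((\<lambda>x. x * exp (- lam * x)) has_real_derivative D) (at z) \<and> D \<le> 0"
    using has_real_derivative_mult_exp_neg by (fastforce simp: mult_nonpos_nonneg)
qed

lemma sqrt_diff_le_taylor:
  fixes z y S :: real
  assumes "0 < z" "y \<le> z" "\<bar>y\<bar> \<le> S"
  shows "sqrt (z - y) \<le> sqrt z - y / (2 * sqrt z) - y\<^sup>2 / (8 * ((z + S) * sqrt (z + S)))"
proof -
  define A B C where "A = sqrt z" and "B = sqrt (z - y)" and "C = sqrt (z + S)"
  have A: "0 < A" and B: "0 \<le> B" and CA: "A \<le> C" and CB: "B \<le> C"
    using assms by (auto simp: A_def B_def C_def)
  have y: "y = A\<^sup>2 - B\<^sup>2" and zS: "z + S = C\<^sup>2"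
    using assms by (auto simp: A_def B_def C_def)
  have "(A + B)\<^sup>2 \<le> (2 * C)\<^sup>2"
    using CA CB A B by (intro power_mono) auto
  then have "(A - B)\<^sup>2 * (A + B)\<^sup>2 / (8 * C ^ 3) \<le> (A - B)\<^sup>2 * (2 * C)\<^sup>2 / (8 * C ^ 3)"
    using A CA by (intro divide_right_mono mult_left_mono) auto
  also have "\<dots> = (A - B)\<^sup>2 / (2 * C)"
    using A CA by (simp add: field_simps power2_eq_square power3_eq_cube)
  also have "\<dots> \<le> (A - B)\<^sup>2 / (2 * A)"
    using A CA by (intro divide_left_mono) auto
  finally have key: "(A - B)\<^sup>2 * (A + B)\<^sup>2 / (8 * C ^ 3) \<le> (A - B)\<^sup>2 / (2 * A)" .
  have "y\<^sup>2 / (8 * ((z + S) * sqrt (z + S))) = (A - B)\<^sup>2 * (A + B)\<^sup>2 / (8 * C ^ 3)"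
    unfolding y zS C_def[symmetric] using A CA
    by (simp add: power2_eq_square power3_eq_cube algebra_simps)
  moreover have "sqrt z - y / (2 * sqrt z) - B = (A - B)\<^sup>2 / (2 * A)"
    unfolding A_def[symmetric] y using A by (simp add: field_simps power2_eq_square)
  ultimately show ?thesis
    using key B_def by simp
qed

lemma powr_three_halves:
  fixes x :: real
  assumes "0 < x"
  shows "x powr (3 / 2) = x * sqrt x"
proof -
  have "x powr (3 / 2) = x powr (1 + 1 / 2)"
    by simp
  also have "\<dots> = x powr 1 * x powr (1 / 2)"
    by (rule powr_add)
  finally show ?thesis
    using assms by (simp add: powr_half_sqrt)
qed

lemma sqrt_affine_pos:
  fixes h q x :: real
  assumes "0 < h" "(q / h)\<^sup>2 < x"
  shows "0 < h * x - q * sqrt x"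
proof -
  have x: "0 < x"
    using assms(2) by (smt (verit) zero_le_power2)
  have "q < h * sqrt x"
    using real_less_rsqrt[OF assms(2)] assms(1) by (simp add: field_simps)
  then have "0 < sqrt x * (h * sqrt x - q)"
    using x by simp
  then show ?thesis
    using x by (simp add: algebra_simps)
qed

lemma sqrt_affine_nonpos:
  fixes h q x :: real
  assumes "0 < h" "0 \<le> q" "0 \<le> x" "x \<le> (q / h)\<^sup>2"
  shows "h * x - q * sqrt x \<le> 0"
proof -
  have "sqrt x \<le> q / h"
    using real_sqrt_le_mono[OF assms(4)] assms by simp
  then have "sqrt x * (h * sqrt x - q) \<le> 0"
    using assms by (intro mult_nonneg_nonpos) (auto simp: field_simps)
  then show ?thesis
    using assms(3) by (simp add: algebra_simps)
qed

lemma sqrt_affine_mono: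
  fixes h q x y :: real
  assumes "0 < h" "(q / h)\<^sup>2 < x" "x \<le> y"
  shows "h * x - q * sqrt x \<le> h * y - q * sqrt y"
proof -
  have x: "0 < x"
    using assms(2) by (smt (verit) zero_le_power2)
  have "q < h * sqrt x"
    using real_less_rsqrt[OF assms(2)] assms(1) by (simp add: field_simps)
  moreover have "0 \<le> h * sqrt y"
    using assms(1,3) x by simp
  ultimately have "0 \<le> h * (sqrt y + sqrt x) - q"
    unfolding distrib_left by linarith
  moreover have "0 \<le> sqrt y - sqrt x"
    using assms(3) by simp
  ultimately have "0 \<le> (sqrt y - sqrt x) * (h * (sqrt y + sqrt x) - q)"
    by simp
  then show ?thesis
    using x assms(3) by (simp add: algebra_simps)
qed

lemma has_real_derivative_sqrt_profile:
  fixes h q lam z :: real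
  assumes "0 < z"
  shows "((\<lambda>x. (h * x - q * sqrt x) * exp (- lam * x)) has_real_derivative
          (h - q / (2 * sqrt z) - lam * (h * z - q * sqrt z)) * exp (- lam * z)) (at z)"
  using assms by (auto intro!: derivative_eq_intros simp: field_simps)

lemma cubic_nonneg_between:
  fixes t a b lam h q :: real
  assumes "h * a = q" "h * b - q / 2 - lam * h * b ^ 3 + lam * q * b\<^sup>2 = 0"
    and "a \<le> t" "t \<le> b" "a < b" "0 < lam" "0 < h" "0 \<le> a"
  shows "0 \<le> h * t - q / 2 - lam * h * t ^ 3 + lam * q * t\<^sup>2"
proof -
  define p where "p = (\<lambda>t. h * t - q / 2 - lam * h * t ^ 3 + lam * q * t\<^sup>2)"
  have interpolation: "(b - a) * p t = (b - t) * p a + (t - a) * p b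
      + (b - a) * (t - a) * (t - b) * (lam * (q - h * (t + a + b)))"
    unfolding p_def by algebra
  have "p a = q / 2"
    using assms(1) by (simp add: p_def power2_eq_square power3_eq_cube algebra_simps)
  moreover have "0 \<le> q"
    using assms(1,7,8) by auto
  ultimately have "0 \<le> (b - t) * p a"
    using assms(4) by simp
  moreover have "lam * (q - h * (t + a + b)) \<le> 0"
  proof -
    have "q - h * (t + a + b) = - (h * (t + b))"
      using assms(1) by (simp add: algebra_simps)
    moreover have "0 \<le> h * (t + b)"
      using assms by simp
    ultimately show ?thesis
      using assms(6) by simp
  qed
  moreover have "(b - a) * (t - a) * (t - b) \<le> 0"
    using assms by (simp add: mult_nonneg_nonpos)
  ultimately have "0 \<le> (b - a) * p t"
    unfolding interpolation using assms(2) by (simp add: p_def mult_nonpos_nonpos)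
  then show ?thesis
    using assms(5) by (simp add: p_def zero_le_mult_iff)
qed

lemma sqrt_profile_mono:
  fixes h q lam zM x y :: real
  defines "g \<equiv> \<lambda>z. (h * z - q * sqrt z) * exp (- lam * z)"
  assumes h: "0 < h" and q: "0 < q" and lam: "0 < lam"
    and zM: "(q / h)\<^sup>2 < zM" "\<forall>z\<ge>0. g z \<le> g zM"
    and xy: "(q / h)\<^sup>2 \<le> x" "x \<le> y" "y \<le> zM"
  shows "g x \<le> g y"
proof -
  (* With t = sqrt z the derivative of g has the sign of the cubic p; p (q / h) = q / 2 > 0, and
    p (sqrt zM) = 0 because zM is a critical point. *)
  define p where "p = (\<lambda>t. h * t - q / 2 - lam * h * t ^ 3 + lam * q * t\<^sup>2)"
  have deriv_eq: "(h - q / (2 * sqrt z) - lam * (h * z - q * sqrt z)) * exp (- lam * z)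
      = p (sqrt z) / sqrt z * exp (- lam * z)" if "0 < z" for z
    using that by (simp add: p_def field_simps power2_eq_square power3_eq_cube)
  have zM0: "0 < zM" and x0: "0 < x"
    using zM(1) xy q h by (smt (verit) divide_pos_pos zero_less_power)+
  have "(h - q / (2 * sqrt zM) - lam * (h * zM - q * sqrt zM)) * exp (- lam * zM) = 0"
  proof (rule DERIV_local_max[OF has_real_derivative_sqrt_profile[OF zM0] zM0])
    show "\<forall>y. \<bar>zM - y\<bar> < zM \<longrightarrow>
        (h * y - q * sqrt y) * exp (- lam * y) \<le> (h * zM - q * sqrt zM) * exp (- lam * zM)"
      using zM(2) by (simp add: g_def abs_less_iff)
  qed
  then have "p (sqrt zM) / sqrt zM * exp (- lam * zM) = 0"
    by (simp only: deriv_eq[OF zM0])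
  then have pT: "p (sqrt zM) = 0"
    using zM0 by simp
  have t0T: "q / h < sqrt zM"
    by (rule real_less_rsqrt[OF zM(1)])
  show ?thesis
    unfolding g_def
  proof (rule DERIV_nonneg_imp_nondecreasing[OF xy(2)])
    fix z assume z: "x \<le> z" "z \<le> y"
    then have "0 < z"
      using x0 by simp
    have lo: "q / h \<le> sqrt z"
      using xy(1) z q h by (smt (verit, best) divide_pos_pos real_le_rsqrt)
    have hi: "sqrt z \<le> sqrt zM"
      using z xy by simp
    have "0 \<le> p (sqrt z)"
      unfolding p_def
      by (rule cubic_nonneg_between[where a = "q / h" and b = "sqrt zM"])
         (use lo hi pT t0T h lam q in \<open>auto simp: p_def\<close>)
    then have "0 \<le> (h - q / (2 * sqrt z) - lam * (h * z - q * sqrt z)) * exp (- lam * z)"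
      unfolding deriv_eq[OF \<open>0 < z\<close>] using \<open>0 < z\<close> by simp
    then show "\<exists>D. ((\<lambda>x. (h * x - q * sqrt x) * exp (- lam * x)) has_real_derivative D) (at z) \<and> 0 \<le> D"
      using has_real_derivative_sqrt_profile[OF \<open>0 < z\<close>, of h q lam] by blast
  qed
qed

lemma bdd_above_power_powr_exp:
  fixes S lam :: real
  assumes "0 < S" "0 < lam"
  shows "bdd_above ((\<lambda>z. z\<^sup>2 * (z + S) powr (3/2) * exp (- lam * z)) ` {0<..})"
proof -
  let ?f = "\<lambda>z::real. z\<^sup>2 * (z + S) powr (3/2) * exp (- lam * z)"
  have "(?f \<longlongrightarrow> 0) at_top"
    using assms by real_asymp
  then have "eventually (\<lambda>z. ?f z < 1) at_top"
    by (rule order_tendstoD) simp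
  then obtain Z where Z: "\<And>z. Z \<le> z \<Longrightarrow> ?f z < 1"
    by (auto simp: eventually_at_top_linorder)
  have "continuous_on {0..Z} ?f"
    using assms by (intro continuous_intros) auto
  then have "bdd_above (?f ` {0..Z})"
    by (intro bounded_imp_bdd_above compact_imp_bounded compact_continuous_image) auto
  then obtain B where "\<forall>v\<in>?f ` {0..Z}. v \<le> B"
    unfolding bdd_above_def by blast
  then have B: "\<And>z. z \<in> {0..Z} \<Longrightarrow> ?f z \<le> B"
    by blast
  show ?thesis
  proof (rule bdd_aboveI[where M = "max B 1"])
    fix v assume "v \<in> ?f ` {0<..}"
    then obtain z where "0 < z" "v = ?f z"
      by auto
    then show "v \<le> max B 1"
      using B[of z] Z[of z] by (cases "z \<le> Z") auto
  qed
qed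

lemma level_set_bounds:
  fixes lam h z1 z2 :: real
  assumes lam: "0 < lam" and h: "0 < h"
    and level: "{z. h * z * exp (- lam * z) = 1} = {z1, z2}" "z1 < 1 / lam" "1 / lam < z2"
  shows "\<forall>x>z2. h * x * exp (- lam * x) < 1"
    and "\<forall>x. z1 \<le> x \<and> x \<le> z2 \<longrightarrow> 1 \<le> h * x * exp (- lam * x)"
proof -
  have w1: "h * (z1 * exp (- lam * z1)) = 1" and w2: "h * (z2 * exp (- lam * z2)) = 1"
    using level(1) by (auto simp: mult.assoc)
  show "\<forall>x>z2. h * x * exp (- lam * x) < 1"
  proof (intro allI impI)
    fix x assume "z2 < x"
    have "h * (x * exp (- lam * x)) \<le> h * (z2 * exp (- lam * z2))"
      by (intro mult_left_mono mult_exp_neg_antimono) (use \<open>z2 < x\<close> level(3) lam h in auto)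
    moreover have "h * x * exp (- lam * x) \<noteq> 1"
    proof
      assume "h * x * exp (- lam * x) = 1"
      then have "x \<in> {z1, z2}"
        using level(1) by blast
      then show False
        using level(2,3) \<open>z2 < x\<close> by auto
    qed
    ultimately show "h * x * exp (- lam * x) < 1"
      using w2 by (simp add: mult.assoc)
  qed
  show "\<forall>x. z1 \<le> x \<and> x \<le> z2 \<longrightarrow> 1 \<le> h * x * exp (- lam * x)"
  proof (intro allI impI)
    fix x assume x: "z1 \<le> x \<and> x \<le> z2"
    show "1 \<le> h * x * exp (- lam * x)"
    proof (cases "x \<le> 1 / lam")
      case True
      have "h * (z1 * exp (- lam * z1)) \<le> h * (x * exp (- lam * x))"
        by (intro mult_left_mono mult_exp_neg_mono) (use x True lam h in auto)
      then show ?thesis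
        using w1 by (simp add: mult.assoc)
    next
      case False
      have "h * (z2 * exp (- lam * z2)) \<le> h * (x * exp (- lam * x))"
        by (intro mult_left_mono mult_exp_neg_antimono) (use x False lam h in auto)
      then show ?thesis
        using w2 by (simp add: mult.assoc)
    qed
  qed
qed

lemma le_SUP_power_powr_exp:
  fixes S lam k m q x :: real
  defines "f \<equiv> \<lambda>z. z\<^sup>2 * (z + S) powr (3/2) * exp (- lam * z)"
  assumes "0 < S" "0 < lam" "0 \<le> k" "0 < m" "k * (SUP z\<in>{0<..}. f z) / m < q" "0 < x"
  shows "k * f x \<le> q * m"
proof -
  have "f x \<le> (SUP z\<in>{0<..}. f z)"
    unfolding f_def using assms by (intro cSUP_upper bdd_above_power_powr_exp) auto
  then have "k * f x \<le> k * (SUP z\<in>{0<..}. f z)"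
    using assms(4) by (rule mult_left_mono)
  also have "\<dots> < q * m"
    using assms(5,6) by (simp add: divide_less_eq)
  finally show ?thesis
    by simp
qed

section \<open>Kernels and exponential moments\<close>

lemma kernel_okD:
  assumes "kernel_ok J lh"
  shows "\<And>y. 0 \<le> J y" "(LINT y|lborel. J y) = 1" "integrable lborel J"
    "J \<in> borel_measurable lborel"
    "\<And>l. 0 < l \<Longrightarrow> ereal l < lh \<Longrightarrow> integrable lborel (\<lambda>y. J y * exp (l * y))"
  using assms unfolding kernel_ok_def by (auto intro: borel_measurable_continuous_onI)

lemma integrable_kernel_shift:
  fixes u :: "real \<Rightarrow> real"
  assumes K: "kernel_ok J lh" and u: "continuous_on UNIV u" "\<And>x. \<bar>u x\<bar> \<le> B"
  shows "integrable lborel (\<lambda>y. J y * u (z - y))"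
proof (rule Bochner_Integration.integrable_bound)
  note J = kernel_okD[OF K]
  show "integrable lborel (\<lambda>y. B * J y)"
    using J(3) by simp
  have "continuous_on UNIV (\<lambda>y. u (z - y))"
    by (rule continuous_on_compose2[where g=u and t=UNIV]) (auto intro!: continuous_intros u(1))
  then have "(\<lambda>y. u (z - y)) \<in> borel_measurable lborel"
    using borel_measurable_continuous_onI by simp
  then show "(\<lambda>y. J y * u (z - y)) \<in> borel_measurable lborel"
    using J(4) by measurable
  show "AE y in lborel. norm (J y * u (z - y)) \<le> norm (B * J y)"
  proof (intro AE_I2)
    fix y
    have "\<bar>u (z - y)\<bar> \<le> \<bar>B\<bar>"
      using u(2) by (meson abs_ge_self order_trans)
    from mult_right_mono[OF this J(1)[of y]] show "norm (J y * u (z - y)) \<le> norm (B * J y)"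
      using J(1)[of y] by (simp add: abs_mult mult.commute)
  qed
qed

lemma Nop_le_of_upper_bound:
  fixes u :: "real \<Rightarrow> real"
  assumes K: "kernel_ok J lh" and u: "continuous_on UNIV u" "\<And>x. \<bar>u x\<bar> \<le> B"
    and le: "\<And>x. u x \<le> c"
  shows "Nop J u z \<le> c - u z"
proof -
  note J = kernel_okD[OF K]
  have "(LINT y|lborel. J y * u (z - y)) \<le> (LINT y|lborel. c * J y)"
    by (intro integral_mono integrable_kernel_shift[OF K u] integrable_mult_right J(3))
       (metis J(1) le mult.commute mult_left_mono)
  then show ?thesis
    using J(2) by (simp add: Nop_def)
qed

lemma Nop_ge_of_lower_bound:
  fixes u :: "real \<Rightarrow> real"
  assumes K: "kernel_ok J lh" and u: "continuous_on UNIV u" "\<And>x. \<bar>u x\<bar> \<le> B"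
    and ge: "\<And>x. c \<le> u x"
  shows "c - u z \<le> Nop J u z"
proof -
  note J = kernel_okD[OF K]
  have "(LINT y|lborel. c * J y) \<le> (LINT y|lborel. J y * u (z - y))"
    by (intro integral_mono integrable_kernel_shift[OF K u] integrable_mult_right J(3))
       (metis J(1) ge mult.commute mult_left_mono)
  then show ?thesis
    using J(2) by (simp add: Nop_def)
qed

definition exp_moment :: "(real \<Rightarrow> real) \<Rightarrow> nat \<Rightarrow> real \<Rightarrow> real" where
  "exp_moment J n l = (LINT y|lborel. J y * y ^ n * exp (l * y))"

lemma exp_moment_0: "exp_moment J 0 l = Imom J l"
  by (simp add: exp_moment_def Imom_def)

lemma integrable_exp_moment:
  assumes K: "kernel_ok J lh" and l: "0 < l" "ereal l < lh"
    and supp: "\<forall>y. \<bar>y\<bar> > S \<longrightarrow> J y = 0"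
  shows "integrable lborel (\<lambda>y. J y * y ^ n * exp (l * y))"
proof (rule Bochner_Integration.integrable_bound)
  note J = kernel_okD[OF K]
  show "integrable lborel (\<lambda>y. \<bar>S\<bar> ^ n * (J y * exp (l * y)))"
    using J(5)[OF l] by simp
  show "(\<lambda>y. J y * y ^ n * exp (l * y)) \<in> borel_measurable lborel"
    using J(4) by measurable
  show "AE y in lborel. norm (J y * y ^ n * exp (l * y)) \<le> norm (\<bar>S\<bar> ^ n * (J y * exp (l * y)))"
  proof (intro AE_I2)
    fix y :: real
    show "norm (J y * y ^ n * exp (l * y)) \<le> norm (\<bar>S\<bar> ^ n * (J y * exp (l * y)))"
    proof (cases "\<bar>y\<bar> > S")
      case False
      then have "\<bar>y\<bar> ^ n * exp (l * y) \<le> \<bar>S\<bar> ^ n * exp (l * y)"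
        by (intro mult_right_mono power_mono) auto
      from mult_left_mono[OF this J(1)[of y]] show ?thesis
        using J(1)[of y] by (simp add: abs_mult power_abs mult_ac)
    qed (use supp in simp)
  qed
qed

lemma exp_moment_even_pos:
  assumes K: "kernel_ok J lh" and "even n"
    and int: "integrable lborel (\<lambda>y. J y * y ^ n * exp (l * y))"
  shows "0 < exp_moment J n l"
proof -
  note J = kernel_okD[OF K]
  have nonneg: "AE y in lborel. 0 \<le> J y * y ^ n * exp (l * y)"
    using J(1) \<open>even n\<close> by (auto intro!: AE_I2 simp: zero_le_even_power)
  have "exp_moment J n l \<noteq> 0"
  proof
    assume "exp_moment J n l = 0"
    then have "AE y in lborel. J y * y ^ n * exp (l * y) = 0"
      using integral_nonneg_eq_0_iff_AE[OF int nonneg] by (simp add: exp_moment_def)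
    then have "AE y in lborel. J y = 0"
      using AE_lborel_singleton[of "0::real"] by eventually_elim simp
    then have "(LINT y|lborel. J y) = 0"
      by (rule integral_eq_zero_AE)
    then show False
      using J(2) by simp
  qed
  moreover have "0 \<le> exp_moment J n l"
    unfolding exp_moment_def using nonneg by (rule integral_nonneg_AE)
  ultimately show ?thesis
    by simp
qed

lemma Nop_exp_quadratic_bounds:
  fixes u :: "real \<Rightarrow> real" and \<alpha> \<beta> \<gamma> :: real
  assumes K: "kernel_ok J lh" and l: "0 < l" "ereal l < lh"
    and supp: "\<forall>y. \<bar>y\<bar> > S \<longrightarrow> J y = 0"
    and u: "continuous_on UNIV u" "\<And>x. \<bar>u x\<bar> \<le> B"
  defines "P \<equiv> \<lambda>y. exp (l * y) * (\<alpha> + \<beta> * y + \<gamma> * y\<^sup>2)"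
    and "M \<equiv> \<alpha> * exp_moment J 0 l + \<beta> * exp_moment J 1 l + \<gamma> * exp_moment J 2 l"
  shows "(\<And>y. \<bar>y\<bar> \<le> S \<Longrightarrow> u (z - y) \<le> P y) \<Longrightarrow> Nop J u z \<le> M - u z"
    and "(\<And>y. \<bar>y\<bar> \<le> S \<Longrightarrow> P y \<le> u (z - y)) \<Longrightarrow> M - u z \<le> Nop J u z"
proof -
  note J = kernel_okD[OF K]
  note mom = integrable_exp_moment[OF K l supp]
  have JP: "(\<lambda>y. J y * P y) = (\<lambda>y. \<alpha> * (J y * y ^ 0 * exp (l * y))
      + \<beta> * (J y * y ^ 1 * exp (l * y)) + \<gamma> * (J y * y ^ 2 * exp (l * y)))"
    by (simp add: P_def fun_eq_iff algebra_simps)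
  have intP: "integrable lborel (\<lambda>y. J y * P y)"
    unfolding JP by (intro Bochner_Integration.integrable_add integrable_mult_right mom)
  have intJP: "(LINT y|lborel. J y * P y) = M"
    unfolding JP M_def exp_moment_def using mom[of 0] mom[of 1] mom[of 2]
    by (simp add: Bochner_Integration.integral_add)
  have supported: "J y * v y = J y * w y" if "\<not> \<bar>y\<bar> \<le> S" for y and v w :: "real \<Rightarrow> real"
    using supp that by simp
  show "Nop J u z \<le> M - u z" if "\<And>y. \<bar>y\<bar> \<le> S \<Longrightarrow> u (z - y) \<le> P y"
  proof -
    have "(LINT y|lborel. J y * u (z - y)) \<le> (LINT y|lborel. J y * P y)"
      using that supported[of _ "\<lambda>y. u (z - y)" P]
      by (intro integral_mono integrable_kernel_shift[OF K u] intP)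
         (metis J(1) mult_left_mono order_refl)
    then show ?thesis
      using intJP by (simp add: Nop_def)
  qed
  show "M - u z \<le> Nop J u z" if "\<And>y. \<bar>y\<bar> \<le> S \<Longrightarrow> P y \<le> u (z - y)"
  proof -
    have "(LINT y|lborel. J y * P y) \<le> (LINT y|lborel. J y * u (z - y))"
      using that supported[of _ P "\<lambda>y. u (z - y)"]
      by (intro integral_mono integrable_kernel_shift[OF K u] intP)
         (metis J(1) mult_left_mono order_refl)
    then show ?thesis
      using intJP by (simp add: Nop_def)
  qed
qed

lemma speed_mult_lam_pos:
  assumes "kernel_ok J lh" "d * (Imom J lam - 1) - s * lam + b = 0" "0 \<le> d" "d < b"
  shows "0 < s * lam"
proof -
  have "0 \<le> Imom J lam"
    unfolding Imom_def using kernel_okD(1)[OF assms(1)] by (intro integral_nonneg_AE AE_I2) simp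
  then have "0 \<le> d * Imom J lam"
    using assms(3) by simp
  then show ?thesis
    using assms(2,4) by (simp add: algebra_simps)
qed

section \<open>The four profiles\<close>

definition phi_upper :: "real \<Rightarrow> real \<Rightarrow> real \<Rightarrow> real" where
  "phi_upper eps lam z = (if z \<le> 0 then 1 - eps else 1 - eps * exp (- lam * z))"

definition psi_upper :: "real \<Rightarrow> real \<Rightarrow> real \<Rightarrow> real \<Rightarrow> real" where
  "psi_upper h lam z2 z = (if z \<le> z2 then 1 else h * z * exp (- lam * z))"

definition phi_lower :: "real \<Rightarrow> real \<Rightarrow> real \<Rightarrow> real" where
  "phi_lower lam0 z3 z = (if z \<le> z3 then 1 / 2 else 1 - exp (- lam0 * (z - z3)) / 2)"

definition psi_lower :: "real \<Rightarrow> real \<Rightarrow> real \<Rightarrow> real \<Rightarrow> real \<Rightarrow> real \<Rightarrow> real" where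
  "psi_lower h q lam z4 delta z =
     (if z \<le> z4 then delta else (h * z - q * sqrt z) * exp (- lam * z))"

lemma phi_upper_bounds:
  assumes "0 \<le> eps" "0 \<le> lam"
  shows "1 - eps \<le> phi_upper eps lam z" "phi_upper eps lam z \<le> 1"
  using assms by (auto simp: phi_upper_def mult_left_le)

lemma continuous_phi_upper: "continuous_on UNIV (phi_upper eps lam)"
  unfolding phi_upper_def[abs_def] by (intro continuous_on_cases_1 continuous_intros) auto

lemma has_real_derivative_phi_upper:
  assumes "z \<noteq> 0"
  shows "(phi_upper eps lam has_real_derivative
           (if z < 0 then 0 else eps * lam * exp (- lam * z))) (at z)"
  unfolding phi_upper_def[abs_def]
  by (rule has_real_derivative_if_le[OF assms]) (auto intro!: derivative_eq_intros)

lemma phi_upper_inequality: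
  assumes K: "kernel_ok J lh" and eps: "0 < eps" "eps \<le> 1" and lam: "0 < lam"
    and sa: "0 \<le> s * lam" "0 \<le> a" and "z \<noteq> 0"
    and psi: "eps * (1 + s * lam + a) * exp (- lam * max 0 z) \<le> psi"
  shows "Nop J (phi_upper eps lam) z + s * deriv (phi_upper eps lam) z
      + a * phi_upper eps lam z * (1 - phi_upper eps lam z) - psi \<le> 0"
proof -
  let ?u = "phi_upper eps lam"
  define E where "E = exp (- lam * max 0 z)"
  have E: "0 < E" "E \<le> 1"
    using lam by (auto simp: E_def)
  have u_z: "?u z = 1 - eps * E"
    using \<open>z \<noteq> 0\<close> by (auto simp: phi_upper_def E_def max_def)
  have "s * deriv ?u z \<le> s * lam * (eps * E)"
    using DERIV_imp_deriv[OF has_real_derivative_phi_upper[OF \<open>z \<noteq> 0\<close>]] sa eps E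
    by (auto simp: E_def max_def)
  moreover have "Nop J ?u z \<le> eps * E"
  proof -
    have "\<bar>?u x\<bar> \<le> 1" for x
      using phi_upper_bounds[of eps lam x] eps lam by simp
    then have "Nop J ?u z \<le> 1 - ?u z"
      by (rule Nop_le_of_upper_bound[OF K continuous_phi_upper]) (use phi_upper_bounds eps lam in auto)
    then show ?thesis
      using u_z by simp
  qed
  moreover have "a * ?u z * (1 - ?u z) \<le> a * (eps * E)"
  proof -
    have "0 \<le> a * (eps * E) * (eps * E)"
      using sa eps E by simp
    then show ?thesis
      unfolding u_z by (simp add: algebra_simps)
  qed
  ultimately have "Nop J ?u z + s * deriv ?u z + a * ?u z * (1 - ?u z) \<le> eps * (1 + s * lam + a) * E"
    by (simp add: algebra_simps)
  then show ?thesis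
    using psi by (simp add: E_def)
qed

lemma continuous_psi_upper:
  assumes "h * z2 * exp (- lam * z2) = 1"
  shows "continuous_on UNIV (psi_upper h lam z2)"
  unfolding psi_upper_def[abs_def] using assms
  by (intro continuous_on_cases_1 continuous_intros) auto

lemma has_real_derivative_psi_upper:
  assumes "z \<noteq> z2"
  shows "(psi_upper h lam z2 has_real_derivative
           (if z < z2 then 0 else h * exp (- lam * z) - lam * (h * z * exp (- lam * z)))) (at z)"
  unfolding psi_upper_def[abs_def]
  by (rule has_real_derivative_if_le[OF assms]) (auto intro!: derivative_eq_intros simp: algebra_simps)

lemma psi_upper_pos:
  assumes "0 < h" "0 < z2"
  shows "0 < psi_upper h lam z2 z"
  using assms by (auto simp: psi_upper_def)

lemma psi_upper_le_one:
  assumes "\<forall>x>z2. h * x * exp (- lam * x) \<le> 1"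
  shows "psi_upper h lam z2 z \<le> 1"
  using assms by (auto simp: psi_upper_def)

lemma psi_upper_le_tail:
  assumes "\<forall>x. x0 \<le> x \<and> x \<le> z2 \<longrightarrow> 1 \<le> h * x * exp (- lam * x)" "x0 \<le> x"
  shows "psi_upper h lam z2 x \<le> h * x * exp (- lam * x)"
  using assms by (auto simp: psi_upper_def)

lemma exp_linear_tail_inequality:
  fixes u :: "real \<Rightarrow> real"
  assumes K: "kernel_ok J lh" and lam: "0 < lam" "ereal lam < lh"
    and supp: "\<forall>y. \<bar>y\<bar> > S \<longrightarrow> J y = 0"
    and root: "d * (Imom J lam - 1) - s * lam + b = 0" and double: "d * exp_moment J 1 lam = s"
    and db: "0 \<le> d" "0 \<le> b" and phi: "0 < phi"
    and u: "continuous_on UNIV u" "\<And>x. \<bar>u x\<bar> \<le> B"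
    and le: "\<And>y. \<bar>y\<bar> \<le> S \<Longrightarrow> u (z - y) \<le> h * (z - y) * exp (- lam * (z - y))"
    and u_z: "u z = h * z * exp (- lam * z)"
  shows "d * Nop J u z + s * (h * exp (- lam * z) - lam * (h * z * exp (- lam * z)))
      + b * u z * (1 - u z / phi) \<le> 0"
proof -
  define E where "E = exp (- lam * z)"
  have "Nop J u z \<le> (h * z * E) * exp_moment J 0 lam + (- h * E) * exp_moment J 1 lam
      + 0 * exp_moment J 2 lam - u z"
  proof (rule Nop_exp_quadratic_bounds(1)[OF K lam supp u])
    fix y :: real
    assume "\<bar>y\<bar> \<le> S"
    then have "u (z - y) \<le> h * (z - y) * exp (- lam * (z - y))"
      by (rule le)
    also have "\<dots> = exp (lam * y) * (h * z * E + - h * E * y + 0 * y\<^sup>2)"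
      by (simp add: E_def algebra_simps flip: exp_add)
    finally show "u (z - y) \<le> exp (lam * y) * (h * z * E + - h * E * y + 0 * y\<^sup>2)" .
  qed
  then have "d * Nop J u z \<le> d * ((h * z * E) * Imom J lam - h * E * exp_moment J 1 lam - h * z * E)"
    using db u_z by (intro mult_left_mono) (auto simp: exp_moment_0 E_def)
  moreover have "b * u z * (1 - u z / phi) \<le> b * (h * z * E)"
  proof -
    have "b * u z * (1 - u z / phi) = b * u z - b * (u z * u z / phi)"
      by (simp add: algebra_simps)
    moreover have "0 \<le> b * (u z * u z / phi)"
      using phi db by simp
    ultimately show ?thesis
      using u_z by (simp add: E_def)
  qed
  (* By the root and double-root conditions the exponential tail solves the linearised equation. *)
  moreover have "d * ((h * z * E) * Imom J lam - h * E * exp_moment J 1 lam - h * z * E)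
      + s * (h * E - lam * (h * z * E)) + b * (h * z * E)
      = (h * z * E) * (d * (Imom J lam - 1) - s * lam + b) - h * E * (d * exp_moment J 1 lam - s)"
    by (simp add: algebra_simps)
  ultimately show ?thesis
    using root double by (simp add: E_def)
qed

lemma psi_upper_inequality:
  assumes K: "kernel_ok J lh" and lam: "0 < lam" "ereal lam < lh"
    and supp: "\<forall>y. \<bar>y\<bar> > S \<longrightarrow> J y = 0"
    and root: "d * (Imom J lam - 1) - s * lam + b = 0" and double: "d * exp_moment J 1 lam = s"
    and db: "0 \<le> d" "0 \<le> b" and h: "0 < h" and z2: "0 < z2"
    and w_z2: "h * z2 * exp (- lam * z2) = 1"
    and w_le: "\<forall>x>z2. h * x * exp (- lam * x) \<le> 1"
    and w_ge: "\<forall>x. z2 - S \<le> x \<and> x \<le> z2 \<longrightarrow> 1 \<le> h * x * exp (- lam * x)"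
    and phi: "0 < phi" "phi \<le> 1" and "z \<noteq> z2"
  shows "d * Nop J (psi_upper h lam z2) z + s * deriv (psi_upper h lam z2) z
      + b * psi_upper h lam z2 z * (1 - psi_upper h lam z2 z / phi) \<le> 0"
proof -
  let ?u = "psi_upper h lam z2"
  note bounds = psi_upper_pos[OF h z2, of lam] psi_upper_le_one[OF w_le]
  have u_abs: "\<bar>?u x\<bar> \<le> 1" for x
    using bounds[where z = x] by (simp add: less_imp_le)
  note cont = continuous_psi_upper[OF w_z2]
  note deriv_u = DERIV_imp_deriv[OF has_real_derivative_psi_upper[OF \<open>z \<noteq> z2\<close>]]
  show ?thesis
  proof (cases "z < z2")
    case True
    have "Nop J ?u z \<le> 1 - ?u z"
      by (rule Nop_le_of_upper_bound[OF K cont u_abs]) (use bounds in auto)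
    then have "d * Nop J ?u z \<le> 0"
      using True db by (simp add: psi_upper_def mult_nonneg_nonpos)
    moreover have "b * (1 - 1 / phi) \<le> 0"
      using db phi by (simp add: mult_nonneg_nonpos)
    ultimately show ?thesis
      using True deriv_u by (simp add: psi_upper_def)
  next
    case False
    then have "z2 < z"
      using \<open>z \<noteq> z2\<close> by simp
    have "?u (z - y) \<le> h * (z - y) * exp (- lam * (z - y))" if "\<bar>y\<bar> \<le> S" for y
      using psi_upper_le_tail[OF w_ge] that \<open>z2 < z\<close> by simp
    moreover have "?u z = h * z * exp (- lam * z)"
      using \<open>z2 < z\<close> by (simp add: psi_upper_def)
    ultimately show ?thesis
      using exp_linear_tail_inequality[OF K lam supp root double db phi(1) cont u_abs] deriv_u
        \<open>z2 < z\<close> by simp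
  qed
qed

lemma phi_lower_bounds:
  assumes "0 \<le> lam0"
  shows "1 / 2 \<le> phi_lower lam0 z3 z" "phi_lower lam0 z3 z \<le> 1"
    "1 - exp (- lam0 * (z - z3)) / 2 \<le> phi_lower lam0 z3 z"
  using assms by (auto simp: phi_lower_def mult_nonneg_nonpos)

lemma continuous_phi_lower: "continuous_on UNIV (phi_lower lam0 z3)"
  unfolding phi_lower_def[abs_def] by (intro continuous_on_cases_1 continuous_intros) auto

lemma has_real_derivative_phi_lower:
  assumes "z \<noteq> z3"
  shows "(phi_lower lam0 z3 has_real_derivative
           (if z < z3 then 0 else lam0 * exp (- lam0 * (z - z3)) / 2)) (at z)"
  unfolding phi_lower_def[abs_def]
  by (rule has_real_derivative_if_le[OF assms]) (auto intro!: derivative_eq_intros)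

lemma Nop_phi_lower_tail_ge:
  assumes K: "kernel_ok J lh" and lam0: "0 < lam0" "ereal lam0 < lh" and "z3 < z"
  shows "exp (- lam0 * (z - z3)) / 2 * (1 - Imom J lam0) \<le> Nop J (phi_lower lam0 z3) z"
proof -
  let ?u = "phi_lower lam0 z3"
  define u where "u = exp (- lam0 * (z - z3)) / 2"
  note J = kernel_okD[OF K]
  note bounds = phi_lower_bounds[OF less_imp_le[OF lam0(1)]]
  have u_abs: "\<bar>?u x\<bar> \<le> 1" for x
    using bounds(1,2)[of z3 x] by simp
  have "(LINT y|lborel. J y - u * (J y * exp (lam0 * y))) \<le> (LINT y|lborel. J y * ?u (z - y))"
  proof (rule integral_mono)
    show "integrable lborel (\<lambda>y. J y - u * (J y * exp (lam0 * y)))"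
      using J(3) J(5)[OF lam0] by simp
    show "integrable lborel (\<lambda>y. J y * ?u (z - y))"
      by (rule integrable_kernel_shift[OF K continuous_phi_lower u_abs])
    fix y
    have "1 - u * exp (lam0 * y) \<le> ?u (z - y)"
      using bounds(3)[of "z - y" z3] by (simp add: u_def algebra_simps flip: exp_add)
    from mult_left_mono[OF this J(1)[of y]]
    show "J y - u * (J y * exp (lam0 * y)) \<le> J y * ?u (z - y)"
      by (simp add: algebra_simps)
  qed
  also have "(LINT y|lborel. J y - u * (J y * exp (lam0 * y))) = 1 - u * Imom J lam0"
    using J(2,3) J(5)[OF lam0] by (simp add: Imom_def)
  finally have "1 - u * Imom J lam0 \<le> (LINT y|lborel. J y * ?u (z - y))" .
  moreover have "Nop J ?u z = (LINT y|lborel. J y * ?u (z - y)) - (1 - u)"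
    using \<open>z3 < z\<close> by (simp add: Nop_def phi_lower_def u_def)
  ultimately have "u * (1 - Imom J lam0) \<le> Nop J ?u z"
    by (simp add: right_diff_distrib)
  then show ?thesis
    by (simp add: u_def)
qed

lemma phi_lower_inequality:
  assumes K: "kernel_ok J lh" and lam0: "0 < lam0" "ereal lam0 < lh"
    and I: "Imom J lam0 - 1 - s * lam0 \<le> 0" and a: "0 \<le> a" and "z \<noteq> z3"
    and psi: "psi \<le> a / 4 * exp (- lam0 * max 0 (z - z3))"
  shows "Nop J (phi_lower lam0 z3) z + s * deriv (phi_lower lam0 z3) z
      + a * phi_lower lam0 z3 z * (1 - phi_lower lam0 z3 z) - psi \<ge> 0"
proof -
  let ?u = "phi_lower lam0 z3"
  note bounds = phi_lower_bounds[OF less_imp_le[OF lam0(1)]]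
  note deriv_u = DERIV_imp_deriv[OF has_real_derivative_phi_lower[OF \<open>z \<noteq> z3\<close>]]
  show ?thesis
  proof (cases "z < z3")
    case True
    have "\<bar>?u x\<bar> \<le> 1" for x
      using bounds(1,2)[of z3 x] by simp
    then have "1 / 2 - ?u z \<le> Nop J ?u z"
      by (rule Nop_ge_of_lower_bound[OF K continuous_phi_lower]) (use bounds in auto)
    then show ?thesis
      using True psi deriv_u by (simp add: phi_lower_def)
  next
    case False
    then have "z3 < z"
      using \<open>z \<noteq> z3\<close> by simp
    define u where "u = exp (- lam0 * (z - z3)) / 2"
    have u: "0 < u" "u \<le> 1 / 2"
      using \<open>z3 < z\<close> lam0 by (auto simp: u_def)
    have u_z: "?u z = 1 - u" and du: "deriv ?u z = lam0 * u"
      using \<open>z3 < z\<close> deriv_u by (auto simp: phi_lower_def u_def)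
    have "a * u / 2 \<le> a * ?u z * (1 - ?u z)"
    proof -
      have "a * u * (1 / 2) \<le> a * u * (1 - u)"
        using a u by (intro mult_left_mono) auto
      then show ?thesis
        by (simp add: u_z mult_ac)
    qed
    moreover have "psi \<le> a * u / 2"
      using psi \<open>z3 < z\<close> by (simp add: u_def max_def)
    moreover have "0 \<le> u * (1 - Imom J lam0) + s * (lam0 * u)"
    proof -
      have "0 \<le> u * (1 - Imom J lam0 + s * lam0)"
        using u I by simp
      then show ?thesis
        by (simp add: algebra_simps)
    qed
    moreover have "u * (1 - Imom J lam0) \<le> Nop J ?u z"
      using Nop_phi_lower_tail_ge[OF K lam0 \<open>z3 < z\<close>] by (simp add: u_def)
    ultimately show ?thesis
      unfolding du by linarith
  qed
qed

lemma continuous_psi_lower: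
  assumes "0 \<le> z4" "(h * z4 - q * sqrt z4) * exp (- lam * z4) = delta"
  shows "continuous_on UNIV (psi_lower h q lam z4 delta)"
  unfolding psi_lower_def[abs_def] using assms
  by (intro continuous_on_cases_1 continuous_intros) auto

lemma has_real_derivative_psi_lower:
  assumes "z \<noteq> z4" "0 \<le> z4"
  shows "(psi_lower h q lam z4 delta has_real_derivative
           (if z < z4 then 0 else (h - q / (2 * sqrt z) - lam * (h * z - q * sqrt z)) * exp (- lam * z)))
         (at z)"
  unfolding psi_lower_def[abs_def]
  by (rule has_real_derivative_if_le[OF assms(1)])
     (use assms(2) has_real_derivative_sqrt_profile[of z h q lam] in auto)

lemma psi_lower_pos:
  assumes "0 < h" "0 < delta" "(q / h)\<^sup>2 < z4"
  shows "0 < psi_lower h q lam z4 delta z"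
  using assms sqrt_affine_pos[OF assms(1), of q z] by (auto simp: psi_lower_def)

lemma psi_lower_le:
  assumes "0 \<le> h" "0 \<le> q" "0 < lam" "0 \<le> z4"
  shows "psi_lower h q lam z4 delta z \<le> max delta (h / (lam * exp 1))"
proof (cases "z \<le> z4")
  case False
  then have "(h * z - q * sqrt z) * exp (- lam * z) \<le> h * (z * exp (- lam * z))"
    using assms by (simp add: algebra_simps)
  also have "\<dots> \<le> h * (1 / (lam * exp 1))"
    using mult_exp_neg_le[OF assms(3)] assms(1) by (rule mult_left_mono)
  finally show ?thesis
    using False by (simp add: psi_lower_def)
qed (simp add: psi_lower_def)

lemma psi_lower_ge_tail:
  fixes h q lam zM z4 delta :: real
  defines "g \<equiv> \<lambda>z. (h * z - q * sqrt z) * exp (- lam * z)"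
  assumes h: "0 < h" and q: "0 < q" and lam: "0 < lam"
    and zM: "(q / h)\<^sup>2 < zM" "\<forall>z\<ge>0. g z \<le> g zM"
    and z4: "(q / h)\<^sup>2 < z4" "z4 \<le> zM" "g z4 = delta" and "0 \<le> delta" and "0 < x"
  shows "g x \<le> psi_lower h q lam z4 delta x"
proof (cases "x \<le> z4")
  case True
  show ?thesis
  proof (cases "x \<le> (q / h)\<^sup>2")
    case True
    then have "g x \<le> 0"
      using sqrt_affine_nonpos[OF h less_imp_le[OF q] less_imp_le[OF \<open>0 < x\<close>]]
      by (simp add: g_def mult_nonpos_nonneg)
    then show ?thesis
      using \<open>x \<le> z4\<close> \<open>0 \<le> delta\<close> by (simp add: psi_lower_def)
  next
    case False
    then have "g x \<le> g z4"
      unfolding g_def by (intro sqrt_profile_mono[OF h q lam zM[unfolded g_def]]) (use \<open>x \<le> z4\<close> z4 in auto)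
    then show ?thesis
      using \<open>x \<le> z4\<close> z4 by (simp add: psi_lower_def)
  qed
qed (simp add: psi_lower_def g_def)

lemma Nop_ge_sqrt_profile_taylor:
  fixes u :: "real \<Rightarrow> real" and h q lam S z :: real
  assumes K: "kernel_ok J lh" and lam: "0 < lam" "ereal lam < lh"
    and supp: "\<forall>y. \<bar>y\<bar> > S \<longrightarrow> J y = 0"
    and u: "continuous_on UNIV u" "\<And>x. \<bar>u x\<bar> \<le> B"
    and tail: "\<forall>x>0. (h * x - q * sqrt x) * exp (- lam * x) \<le> u x"
    and "0 \<le> q" "S < z"
  defines "E \<equiv> exp (- lam * z)"
  shows "E * (h * z - q * sqrt z) * exp_moment J 0 lam + E * (q / (2 * sqrt z) - h) * exp_moment J 1 lam
      + E * q / (8 * ((z + S) * sqrt (z + S))) * exp_moment J 2 lam - u z \<le> Nop J u z"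
proof (rule Nop_exp_quadratic_bounds(2)[OF K lam supp u])
  fix y :: real
  assume y: "\<bar>y\<bar> \<le> S"
  then have z: "0 < z" "y < z"
    using \<open>S < z\<close> by auto
  have "exp (lam * y) * (E * (h * z - q * sqrt z) + E * (q / (2 * sqrt z) - h) * y
        + E * q / (8 * ((z + S) * sqrt (z + S))) * y\<^sup>2)
      = exp (- lam * (z - y)) * (h * (z - y)
        - q * (sqrt z - y / (2 * sqrt z) - y\<^sup>2 / (8 * ((z + S) * sqrt (z + S)))))"
    using z by (simp add: E_def field_simps flip: exp_add)
  also have "\<dots> \<le> exp (- lam * (z - y)) * (h * (z - y) - q * sqrt (z - y))"
    using sqrt_diff_le_taylor[OF z(1) less_imp_le[OF z(2)] y] \<open>0 \<le> q\<close>
    by (intro mult_left_mono) (auto intro: mult_left_mono)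
  also have "\<dots> \<le> u (z - y)"
    using tail z(2) by (metis diff_gt_0_iff_gt mult.commute)
  finally show "exp (lam * y) * (E * (h * z - q * sqrt z) + E * (q / (2 * sqrt z) - h) * y
        + E * q / (8 * ((z + S) * sqrt (z + S))) * y\<^sup>2) \<le> u (z - y)" .
qed

lemma sqrt_profile_tail_inequality:
  fixes u :: "real \<Rightarrow> real"
  assumes K: "kernel_ok J lh" and lam: "0 < lam" "ereal lam < lh"
    and S: "0 < S" and supp: "\<forall>y. \<bar>y\<bar> > S \<longrightarrow> J y = 0"
    and root: "d * (Imom J lam - 1) - s * lam + b = 0" and double: "d * exp_moment J 1 lam = s"
    and q_large: "\<forall>x>0. 16 * b * h\<^sup>2 * (x\<^sup>2 * (x + S) powr (3/2) * exp (- lam * x))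
                    \<le> q * (d * exp_moment J 2 lam)"
    and d: "0 < d" and b: "0 < b" and q: "0 < q" and phi: "1 / 2 \<le> phi"
    and u: "continuous_on UNIV u" "\<And>x. \<bar>u x\<bar> \<le> B"
    and tail: "\<forall>x>0. (h * x - q * sqrt x) * exp (- lam * x) \<le> u x"
    and "S < z" and u_z: "u z = (h * z - q * sqrt z) * exp (- lam * z)" "0 < u z"
  shows "0 \<le> d * Nop J u z + s * ((h - q / (2 * sqrt z) - lam * (h * z - q * sqrt z)) * exp (- lam * z))
      + b * u z * (1 - u z / phi)"
proof -
  have z: "0 < z"
    using S \<open>S < z\<close> by simp
  define E c where "E = exp (- lam * z)" and "c = (z + S) * sqrt (z + S)"
  define A B C where "A = E * (h * z - q * sqrt z)" and "B = E * (q / (2 * sqrt z) - h)"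
    and "C = E * q / (8 * c)"
  have E: "0 < E" and c: "0 < c"
    using z S by (auto simp: E_def c_def)
  have A: "u z = A" "0 < A"
    using u_z by (auto simp: A_def E_def mult.commute)
  have "A * exp_moment J 0 lam + B * exp_moment J 1 lam + C * exp_moment J 2 lam - A \<le> Nop J u z"
    using Nop_ge_sqrt_profile_taylor[OF K lam supp u tail less_imp_le[OF q] \<open>S < z\<close>] A
    by (simp add: A_def B_def C_def E_def c_def)
  then have N: "d * (A * Imom J lam + B * exp_moment J 1 lam + C * exp_moment J 2 lam - A)
      \<le> d * Nop J u z"
    using d by (simp add: exp_moment_0)
  have "b * A - 2 * b * A\<^sup>2 \<le> b * A * (1 - A / phi)"
  proof -
    have "A / phi \<le> 2 * A"
      using phi A by (simp add: field_simps)
    from mult_left_mono[OF this, of "b * A"] show ?thesis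
      using A b by (simp add: power2_eq_square algebra_simps)
  qed
  (* The Taylor remainder, of order q E / z^(3/2), dominates the quadratic term. *)
  moreover have "2 * b * A\<^sup>2 \<le> d * C * exp_moment J 2 lam"
  proof -
    have "A \<le> h * z * E"
      using E q z by (simp add: A_def algebra_simps)
    then have "2 * b * A\<^sup>2 \<le> 2 * b * (h * z * E)\<^sup>2"
      using A b by (intro mult_left_mono power_mono) auto
    also have "\<dots> = 16 * b * h\<^sup>2 * (z\<^sup>2 * (z + S) powr (3/2) * E) * (E / (8 * c))"
      using c z S by (simp add: c_def powr_three_halves field_simps power2_eq_square)
    also have "\<dots> \<le> q * (d * exp_moment J 2 lam) * (E / (8 * c))"
      using q_large z E c by (intro mult_right_mono) (auto simp: E_def)
    also have "\<dots> = d * C * exp_moment J 2 lam"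
      by (simp add: C_def)
    finally show ?thesis .
  qed
  moreover have "d * (A * Imom J lam + B * exp_moment J 1 lam + C * exp_moment J 2 lam - A)
      + s * ((h - q / (2 * sqrt z) - lam * (h * z - q * sqrt z)) * E) + b * A
      = A * (d * (Imom J lam - 1) - s * lam + b) + B * (d * exp_moment J 1 lam - s)
        + d * C * exp_moment J 2 lam"
    using z by (simp add: A_def B_def field_simps)
  ultimately show ?thesis
    using N root double A by (simp add: E_def)
qed

lemma psi_lower_inequality:
  assumes K: "kernel_ok J lh" and lam: "0 < lam" "ereal lam < lh"
    and S: "0 < S" and supp: "\<forall>y. \<bar>y\<bar> > S \<longrightarrow> J y = 0"
    and root: "d * (Imom J lam - 1) - s * lam + b = 0" and double: "d * exp_moment J 1 lam = s"
    and q_large: "\<forall>x>0. 16 * b * h\<^sup>2 * (x\<^sup>2 * (x + S) powr (3/2) * exp (- lam * x))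
                    \<le> q * (d * exp_moment J 2 lam)"
    and d: "0 < d" and b: "0 < b" and h: "0 < h" and q: "0 < q"
    and delta: "0 < delta" "2 * delta \<le> 1 - d / b"
    and z4: "(q / h)\<^sup>2 < z4" "S < z4" "(h * z4 - q * sqrt z4) * exp (- lam * z4) = delta"
    and tail: "\<forall>x>0. (h * x - q * sqrt x) * exp (- lam * x) \<le> psi_lower h q lam z4 delta x"
    and phi: "1 / 2 \<le> phi" and "z \<noteq> z4"
  shows "d * Nop J (psi_lower h q lam z4 delta) z + s * deriv (psi_lower h q lam z4 delta) z
      + b * psi_lower h q lam z4 delta z * (1 - psi_lower h q lam z4 delta z / phi) \<ge> 0"
proof -
  let ?u = "psi_lower h q lam z4 delta"
  have "0 \<le> z4"
    using z4(1) by (smt (verit) zero_le_power2)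
  note pos = psi_lower_pos[OF h delta(1) z4(1)]
  have u_abs: "\<bar>?u x\<bar> \<le> max delta (h / (lam * exp 1))" for x
    using pos[of lam x] psi_lower_le[of h q lam z4 delta x] h q lam \<open>0 \<le> z4\<close> by simp
  note cont = continuous_psi_lower[OF \<open>0 \<le> z4\<close> z4(3)]
  note deriv_u = DERIV_imp_deriv[OF has_real_derivative_psi_lower[OF \<open>z \<noteq> z4\<close> \<open>0 \<le> z4\<close>]]
  show ?thesis
  proof (cases "z < z4")
    case True
    then have u_z: "?u z = delta"
      by (simp add: psi_lower_def)
    have "0 - ?u z \<le> Nop J ?u z"
      by (rule Nop_ge_of_lower_bound[OF K cont u_abs]) (use pos in \<open>simp add: less_imp_le\<close>)
    then have "d * (- delta) \<le> d * Nop J ?u z"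
      using d u_z by (intro mult_left_mono) auto
    moreover have "b * delta * (1 - 2 * delta) \<le> b * delta * (1 - delta / phi)"
      using phi b delta(1) by (intro mult_left_mono) (auto simp: field_simps)
    moreover have "d * delta \<le> b * delta * (1 - 2 * delta)"
    proof -
      have "d \<le> b * (1 - 2 * delta)"
        using delta b by (simp add: field_simps)
      from mult_right_mono[OF this less_imp_le[OF delta(1)]] show ?thesis
        by (simp add: mult_ac)
    qed
    ultimately show ?thesis
      using True u_z deriv_u by simp
  next
    case False
    then have "z4 < z"
      using \<open>z \<noteq> z4\<close> by simp
    then have "?u z = (h * z - q * sqrt z) * exp (- lam * z)"
      by (simp add: psi_lower_def)
    then show ?thesis
      using sqrt_profile_tail_inequality[OF K lam S supp root double q_large d b q phi cont u_abs tail]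
        pos[of lam z] deriv_u \<open>z4 < z\<close> z4(2) by simp
  qed
qed

section \<open>Comparisons between the profiles\<close>

lemma phi_lower_le_phi_upper:
  assumes "0 \<le> eps" "eps \<le> 1 / 2" "0 \<le> lam0" "lam0 \<le> lam" "0 \<le> z3"
  shows "phi_lower lam0 z3 z \<le> phi_upper eps lam z"
proof (cases "z \<le> z3")
  case True
  then show ?thesis
    using phi_upper_bounds(1)[of eps lam z] assms by (simp add: phi_lower_def)
next
  case False
  then have "0 < z"
    using assms(5) by simp
  have "lam0 * (z - z3) \<le> lam0 * z"
    using assms(3,5) by (simp add: algebra_simps)
  also have "\<dots> \<le> lam * z"
    using assms(4) \<open>0 < z\<close> by (simp add: mult_right_mono)
  finally have "exp (- lam * z) \<le> exp (- lam0 * (z - z3))"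
    by simp
  moreover have "eps * exp (- lam * z) \<le> exp (- lam * z) / 2"
    using assms(2) by simp
  ultimately have "eps * exp (- lam * z) \<le> exp (- lam0 * (z - z3)) / 2"
    by linarith
  then show ?thesis
    using False \<open>0 < z\<close> by (simp add: phi_lower_def phi_upper_def)
qed

lemma psi_lower_le_psi_upper:
  assumes "0 \<le> h" "0 \<le> q" "0 < lam" "delta \<le> 1" "1 / lam \<le> z2" "z2 \<le> z4"
    and "(h * z4 - q * sqrt z4) * exp (- lam * z4) = delta"
  shows "psi_lower h q lam z4 delta z \<le> psi_upper h lam z2 z"
proof -
  have z2: "0 < z2"
    using assms(3,5) by (meson divide_pos_pos less_le_trans zero_less_one)
  have profile_le: "(h * x - q * sqrt x) * exp (- lam * x) \<le> h * x * exp (- lam * x)" if "0 \<le> x" for x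
    using that assms(2) by (simp add: algebra_simps)
  show ?thesis
  proof (cases "z \<le> z4")
    case True
    show ?thesis
    proof (cases "z \<le> z2")
      case False
      have "0 \<le> z4"
        using z2 assms(6) by simp
      from profile_le[OF this, unfolded assms(7)]
      have "delta \<le> h * (z4 * exp (- lam * z4))"
        by (simp add: mult.assoc)
      also have "\<dots> \<le> h * (z * exp (- lam * z))"
        using False True assms by (intro mult_left_mono mult_exp_neg_antimono) auto
      finally show ?thesis
        using False True by (simp add: psi_lower_def psi_upper_def mult.assoc)
    qed (use assms(4) True in \<open>simp add: psi_lower_def psi_upper_def\<close>)
  next
    case False
    then show ?thesis
      using profile_le[of z] z2 assms(6) by (simp add: psi_lower_def psi_upper_def)
  qed
qed

lemma psi_lower_ge_exp:
  assumes "0 \<le> c" "c \<le> delta" "c \<le> h * z4 - q * sqrt z4" "0 < h" "(q / h)\<^sup>2 < z4" "0 \<le> lam"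
  shows "c * exp (- lam * max 0 z) \<le> psi_lower h q lam z4 delta z"
proof (cases "z \<le> z4")
  case True
  have "c * exp (- lam * max 0 z) \<le> c"
    using assms(1,6) by (simp add: mult_left_le)
  then show ?thesis
    using True assms(2) by (simp add: psi_lower_def)
next
  case False
  moreover have "0 \<le> z4"
    using assms(5) by (smt (verit) zero_le_power2)
  moreover have "c \<le> h * z - q * sqrt z"
    using assms(3) sqrt_affine_mono[OF assms(4,5), of z] False by simp
  ultimately show ?thesis
    by (simp add: psi_lower_def mult.commute)
qed

lemma psi_upper_le_exp:
  assumes a: "4 \<le> a" and lam: "0 < lam0" "lam0 < lam" and z: "0 < z2" "z2 < z3"
    and w_le: "\<forall>x>z2. h * x * exp (- lam * x) \<le> 1"
    and z3: "h * exp (- lam0 * z3) \<le> a * (lam - lam0) * exp 1 / 4"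
  shows "psi_upper h lam z2 z \<le> a / 4 * exp (- lam0 * max 0 (z - z3))"
proof (cases "z \<le> z3")
  case True
  then show ?thesis
    using a psi_upper_le_one[OF w_le, of z] by simp
next
  case False
  define c where "c = lam - lam0"
  have c: "0 < c"
    using lam by (simp add: c_def)
  have "h * z * exp (- lam * z) = (h * exp (- lam0 * z3)) * (z * exp (- c * z)) * exp (- lam0 * (z - z3))"
    by (simp add: c_def algebra_simps flip: exp_add)
  also have "\<dots> \<le> (a * c * exp 1 / 4) * (1 / (c * exp 1)) * exp (- lam0 * (z - z3))"
    using z3 mult_exp_neg_le[OF c, of z] a c False z
    by (intro mult_right_mono mult_mono) (auto simp: c_def)
  also have "\<dots> = a / 4 * exp (- lam0 * (z - z3))"
    using c by simp
  finally show ?thesis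
    using False z by (simp add: psi_upper_def)
qed

lemma upper_lower_pair_profiles:
  assumes K1: "kernel_ok J1 lh1" and K2: "kernel_ok J2 lh2"
    and S: "0 < S" and supp: "\<forall>y. \<bar>y\<bar> > S \<longrightarrow> J2 y = 0"
    and lam: "0 < lam" "ereal lam < lh2"
    and root: "d * (Imom J2 lam - 1) - s * lam + b = 0" and double: "d * exp_moment J2 1 lam = s"
    and lam0: "0 < lam0" "lam0 < lam" "ereal lam0 < lh1" "Imom J1 lam0 - 1 - s * lam0 \<le> 0"
    and a: "4 \<le> a" and b: "0 < b" and d: "0 < d" and slam: "0 \<le> s * lam"
    and h: "0 < h" and q: "0 < q"
    and q_large: "\<forall>x>0. 16 * b * h\<^sup>2 * (x\<^sup>2 * (x + S) powr (3/2) * exp (- lam * x))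
                    \<le> q * (d * exp_moment J2 2 lam)"
    and z2: "1 / lam \<le> z2" "z2 < z3" "z2 \<le> z4"
    and w_z2: "h * z2 * exp (- lam * z2) = 1"
    and w_le: "\<forall>x>z2. h * x * exp (- lam * x) \<le> 1"
    and w_ge: "\<forall>x. z2 - S \<le> x \<and> x \<le> z2 \<longrightarrow> 1 \<le> h * x * exp (- lam * x)"
    and z3: "h * exp (- lam0 * z3) \<le> a * (lam - lam0) * exp 1 / 4"
    and z4: "(q / h)\<^sup>2 < z4" "S < z4" "(h * z4 - q * sqrt z4) * exp (- lam * z4) = delta"
    and tail: "\<forall>x>0. (h * x - q * sqrt x) * exp (- lam * x) \<le> psi_lower h q lam z4 delta x"
    and delta: "0 < delta" "delta \<le> 1" "2 * delta \<le> 1 - d / b"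
    and eps: "0 < eps" "eps \<le> 1 / 2" "eps * (1 + s * lam + a) \<le> delta"
      "eps * (1 + s * lam + a) \<le> h * z4 - q * sqrt z4"
  shows "upper_lower_pair J1 J2 a b d s (phi_upper eps lam) (psi_upper h lam z2)
    (phi_lower lam0 z3) (psi_lower h q lam z4 delta)"
proof -
  let ?pU = "phi_upper eps lam" and ?sU = "psi_upper h lam z2"
    and ?pL = "phi_lower lam0 z3" and ?sL = "psi_lower h q lam z4 delta"
  have z2_pos: "0 < z2" and z4_nonneg: "0 \<le> z4"
    using z2 lam by (smt (verit) divide_pos_pos)+
  have ineq_pU: "Nop J1 ?pU z + s * deriv ?pU z + a * ?pU z * (1 - ?pU z) - ?sL z \<le> 0"
    if "z \<noteq> 0" for z
    using phi_upper_inequality[OF K1 eps(1) _ lam(1) slam _ that] psi_lower_ge_exp[OF _ eps(3,4) h z4(1)]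
      eps lam(1) a slam by simp
  have ineq_sU: "d * Nop J2 ?sU z + s * deriv ?sU z + b * ?sU z * (1 - ?sU z / ?pU z) \<le> 0"
    if "z \<noteq> z2" for z
    using psi_upper_inequality[OF K2 lam supp root double _ _ h z2_pos w_z2 w_le w_ge _ _ that]
      phi_upper_bounds[of eps lam z] eps d b lam(1) by simp
  have ineq_pL: "Nop J1 ?pL z + s * deriv ?pL z + a * ?pL z * (1 - ?pL z) - ?sU z \<ge> 0"
    if "z \<noteq> z3" for z
    using phi_lower_inequality[OF K1 lam0(1,3,4) _ that psi_upper_le_exp[OF a lam0(1,2) z2_pos z2(2) w_le z3]]
      a by simp
  have ineq_sL: "d * Nop J2 ?sL z + s * deriv ?sL z + b * ?sL z * (1 - ?sL z / ?pL z) \<ge> 0"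
    if "z \<noteq> z4" for z
    using psi_lower_inequality[OF K2 lam S supp root double q_large d b h q delta(1,3) z4 tail _ that]
      phi_lower_bounds(1)[OF less_imp_le[OF lam0(1)]] by simp
  have pos: "0 < ?pU z" "0 < ?sU z" "0 < ?pL z" "0 < ?sL z" for z
    using phi_upper_bounds(1)[of eps lam z] psi_upper_pos[OF h z2_pos]
      phi_lower_bounds(1)[OF less_imp_le[OF lam0(1)], of z3 z] psi_lower_pos[OF h delta(1) z4(1)]
      eps lam(1) by (auto simp: less_le_trans)
  have ord: "?pL z \<le> ?pU z" "?sL z \<le> ?sU z" for z
    using phi_lower_le_phi_upper[OF less_imp_le[OF eps(1)] eps(2)] psi_lower_le_psi_upper[of h q lam delta z2 z4]
      lam0 z2 z2_pos h q lam(1) delta(2) z4(3) by simp_all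
  have diff: "?pU differentiable at z" "?sU differentiable at z" "?pL differentiable at z"
      "?sL differentiable at z" if "z \<notin> {0, z2, z3, z4}" for z
    unfolding real_differentiable_def
    using that has_real_derivative_phi_upper[of z eps lam] has_real_derivative_psi_upper[of z z2 h lam]
      has_real_derivative_phi_lower[of z z3 lam0]
      has_real_derivative_psi_lower[OF _ z4_nonneg, of z h q lam delta]
    by blast+
  show ?thesis
    unfolding upper_lower_pair_def
    by (intro conjI allI exI[of _ "{0, z2, z3, z4}"] impI)
       (use continuous_phi_upper continuous_psi_upper[OF w_z2] continuous_phi_lower
         continuous_psi_lower[OF z4_nonneg z4(3)] pos ord diff ineq_pU ineq_sU ineq_pL ineq_sL in auto)
qed

lemma eps_choice_bounds:
  fixes eps delta m sl a :: real
  assumes "0 < eps" "eps < min delta m / (1 + sl + a)" "0 < sl" "4 \<le> a" "delta < 1"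
  shows "eps * (1 + sl + a) \<le> delta" "eps * (1 + sl + a) \<le> m" "eps \<le> 1 / 2"
proof -
  show c: "eps * (1 + sl + a) \<le> delta" "eps * (1 + sl + a) \<le> m"
    using assms(1-4) by (simp_all add: less_divide_eq)
  have "eps * 5 \<le> eps * (1 + sl + a)"
    using assms(1,3,4) by (intro mult_left_mono) auto
  then show "eps \<le> 1 / 2"
    using c(1) assms(5) by linarith
qed

theorem lemma2p4:
  fixes J1 J2 :: "real \<Rightarrow> real" and lhat1 lhat2 :: ereal
    and a b d S s lam1 lam0 h z1 z2 z3 q zM delta z4 eps :: real
  assumes a: "a \<ge> 4" and b: "b > 0" and d: "d > 0" and db: "d < b"
    and K1: "kernel_ok J1 lhat1" and K2: "kernel_ok J2 lhat2"
    and S: "0 < S" and supp: "\<forall>y. \<bar>y\<bar> > S \<longrightarrow> J2 y = 0"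
    and s: "s = sstar J2 lhat2 d b"
    and lam1: "0 < lam1" "ereal lam1 < lhat2"
    and lam1_root: "d * (Imom J2 lam1 - 1) - s * lam1 + b = 0"
    and lam1_double: "d * (LINT y|lborel. J2 y * y * exp (lam1 * y)) = s"
    and lam0: "0 < lam0" "lam0 < lam1" "ereal lam0 < lhat1"
      "Imom J1 lam0 - 1 - s * lam0 < 0"
    and h: "h > lam1 * exp 1"
    and z12: "z1 < z2" "{z. h * z * exp (- lam1 * z) = 1} = {z1, z2}"
      "0 < z1" "z1 < 1 / lam1" "1 / lam1 < z2" "z2 - z1 > S"
    and z3: "z3 > z2" "h * exp (- lam0 * z3) \<le> a * (lam1 - lam0) * exp 1 / 4"
    and q: "q > 0" "(q / h)\<^sup>2 > z2"
      "q > 16 * b * h\<^sup>2 * (SUP z\<in>{0<..}. z\<^sup>2 * (z + S) powr (3/2) * exp (- lam1 * z))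
            / (d * (LINT y|lborel. J2 y * y\<^sup>2 * exp (lam1 * y)))"
    and zM: "zM > (q / h)\<^sup>2"
      "\<forall>z\<ge>0. z \<noteq> zM \<longrightarrow>
         (h * z - q * sqrt z) * exp (- lam1 * z) < (h * zM - q * sqrt zM) * exp (- lam1 * zM)"
    and delta: "0 < delta" "delta < (h * zM - q * sqrt zM) * exp (- lam1 * zM)"
      "delta < 1 - 1 / a" "delta < (1 - d / b) / 2"
    and z4: "(q / h)\<^sup>2 < z4" "z4 < zM" "(h * z4 - q * sqrt z4) * exp (- lam1 * z4) = delta"
    and eps: "0 < eps" "eps < min delta (h * z4 - q * sqrt z4) / (1 + s * lam1 + a)"
  shows "upper_lower_pair J1 J2 a b d s
     (\<lambda>z. if z \<le> 0 then 1 - eps else 1 - eps * exp (- lam1 * z))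
     (\<lambda>z. if z \<le> z2 then 1 else h * z * exp (- lam1 * z))
     (\<lambda>z. if z \<le> z3 then 1 / 2 else 1 - exp (- lam0 * (z - z3)) / 2)
     (\<lambda>z. if z \<le> z4 then delta else (h * z - q * sqrt z) * exp (- lam1 * z))"
proof -
  have h_pos: "0 < h"
    using h lam1(1) by (smt (verit) exp_gt_zero mult_pos_pos)
  have slam: "0 < s * lam1"
    using speed_mult_lam_pos[OF K2 lam1_root] d db by simp
  have "0 < exp_moment J2 2 lam1"
    by (rule exp_moment_even_pos[OF K2 _ integrable_exp_moment[OF K2 lam1 supp]]) simp
  then have q_large: "\<forall>x>0. 16 * b * h\<^sup>2 * (x\<^sup>2 * (x + S) powr (3/2) * exp (- lam1 * x))
      \<le> q * (d * exp_moment J2 2 lam1)"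
    using le_SUP_power_powr_exp[OF S lam1(1)] q(3) b d by (simp add: exp_moment_def)
  note levels = level_set_bounds[OF lam1(1) h_pos z12(2,4,5)]
  have tail: "\<forall>x>0. (h * x - q * sqrt x) * exp (- lam1 * x) \<le> psi_lower h q lam1 z4 delta x"
    using psi_lower_ge_tail[OF h_pos q(1) lam1(1) zM(1) _ z4(1) less_imp_le[OF z4(2)] z4(3)] zM(2) delta(1)
    by (metis order.order_iff_strict)
  have double: "d * exp_moment J2 1 lam1 = s"
    using lam1_double by (simp add: exp_moment_def)
  have w: "h * z2 * exp (- lam1 * z2) = 1" "\<forall>x>z2. h * x * exp (- lam1 * x) \<le> 1"
    "\<forall>x. z2 - S \<le> x \<and> x \<le> z2 \<longrightarrow> 1 \<le> h * x * exp (- lam1 * x)"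
    using z12(2,6) levels by (auto simp: less_imp_le)
  have z_order: "z2 \<le> z4" "S < z4"
    using z4(1) q(2) z12 S by linarith+
  have "delta < 1"
    using delta(3) a by (smt (verit) divide_pos_pos)
  note eps_bounds = eps_choice_bounds[OF eps slam a this]
  have "upper_lower_pair J1 J2 a b d s (phi_upper eps lam1) (psi_upper h lam1 z2)
      (phi_lower lam0 z3) (psi_lower h q lam1 z4 delta)"
    by (intro upper_lower_pair_profiles[OF K1 K2 S supp lam1 lam1_root double lam0(1-3)
          less_imp_le[OF lam0(4)] a b d less_imp_le[OF slam] h_pos q(1) q_large less_imp_le[OF z12(5)]
          z3(1) z_order(1) w z3(2) z4(1) z_order(2) z4(3) tail delta(1) less_imp_le[OF \<open>delta < 1\<close>]
          _ eps(1) eps_bounds(3,1,2)])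
       (use delta(4) in simp)
  then show ?thesis
    by (simp only: phi_upper_def[abs_def] psi_upper_def[abs_def] phi_lower_def[abs_def] psi_lower_def[abs_def])
qed

end
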